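(* Consider $N$ spin-$1/2$ particles on $L^2(\mathbb R^{3N})\otimes(\mathbb C^2)^{\otimes N}$ with Pauli Hamiltonian $$H=\sum_{j=1}^N\frac1{2m_j}\Big[(\mathbf p_j-q_j\boldsymbol A(\mathbf x_j))^2-q_j\boldsymbol\sigma_j\cdot\boldsymbol B(\mathbf x_j)\Big],$$ where $\boldsymbol A:\mathbb R^3\to\mathbb R^3$ is smooth, $\boldsymbol B=\nabla\times\boldsymbol A$, $\mathbf p_j=-i\nabla_{\mathbf x_j}$, and $\boldsymbol\sigma_j=(\sigma_x,\sigma_y,\sigma_z)$ acting on the $j$-th spin factor. Let $\mathcal M_m\in O(3)$ with $\mathcal M_m^2=I$ satisfy $\det(\mathcal M_m)\,\mathcal M_m\boldsymbol B(\mathcal M_m\mathbf x)=-\boldsymbol B(\mathbf x)$ for all $\mathbf x\in\mathbb R^3$. Let $U_c$ be the unitary $(U_c\psi)(\mathbf x_1,\dots,\mathbf x_N)=\psi(\mathcal M_m\mathbf x_1,\dots,\mathcal M_m\mathbf x_N)$ and $K$ complex conjugation. Then there exists a unitary $U_s$ on $\mathbb C^2$ such that the antiunitary operator $\mathcal T=(U_c\otimes U_s\otimes\cdots\otimes U_s)K$ is time reversal invariance-yielding for $H$: $\mathcal T H\mathcal T^{-1}$ equals $H$ with $\boldsymbol A$ replaced by $\boldsymbol A+\nabla G$ for some smooth $G:\mathbb R^3\to\mathbb R$ (a gauge transformation, which leaves $\boldsymbol B$ unchanged).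
   Context: The condition $\det(\mathcal M_m)\mathcal M_m\boldsymbol B(\mathcal M_m\mathbf x)=-\boldsymbol B(\mathbf x)$ is the compatibility condition between the coordinate transformation $\mathcal M_m$ and the magnetic field. Under $\mathcal T$, positions and momenta transform as $\mathbf x_j\mapsto\mathcal M_m\mathbf x_j$, $\mathbf p_j\mapsto-\mathcal M_m\mathbf p_j$. *)

theory Defs
  imports "HOL-Analysis.Analysis"
begin

definition dirderiv :: "'a::real_normed_vector \<Rightarrow> ('a \<Rightarrow> 'b::real_normed_vector) \<Rightarrow> 'a \<Rightarrow> 'b" where
  "dirderiv v f x = vector_derivative (\<lambda>t. f (x + t *\<^sub>R v)) (at 0)"

fun iter_dirderiv :: "'a::real_normed_vector list \<Rightarrow> ('a \<Rightarrow> 'b::real_normed_vector) \<Rightarrow> 'a \<Rightarrow> 'b" where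
  "iter_dirderiv [] f = f"
| "iter_dirderiv (v # vs) f = dirderiv v (iter_dirderiv vs f)"

definition smooth :: "('a::euclidean_space \<Rightarrow> 'b::real_normed_vector) \<Rightarrow> bool" where
  "smooth f \<longleftrightarrow> (\<forall>vs. continuous_on UNIV (iter_dirderiv vs f) \<and>
      (\<forall>v x. (\<lambda>t. iter_dirderiv vs f (x + t *\<^sub>R v)) differentiable (at 0)))"

definition pd3 :: "3 \<Rightarrow> (real^3 \<Rightarrow> 'b::real_normed_vector) \<Rightarrow> real^3 \<Rightarrow> 'b" where
  "pd3 k f = dirderiv (axis k 1) f"

definition grad :: "(real^3 \<Rightarrow> real) \<Rightarrow> real^3 \<Rightarrow> real^3" where
  "grad G x = (\<chi> k. pd3 k G x)"

definition curl :: "(real^3 \<Rightarrow> real^3) \<Rightarrow> real^3 \<Rightarrow> real^3" where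
  "curl A x = vector [ pd3 2 (\<lambda>y. A y $ 3) x - pd3 3 (\<lambda>y. A y $ 2) x,
                       pd3 3 (\<lambda>y. A y $ 1) x - pd3 1 (\<lambda>y. A y $ 3) x,
                       pd3 1 (\<lambda>y. A y $ 2) x - pd3 2 (\<lambda>y. A y $ 1) x ]"

text \<open>Particles are indexed by a finite type 'n (N = CARD('n)). A configuration is
  x :: real^3^'n (x $ j is the position of particle j). The spin space (C^2)^{\<otimes>N}
  is identified with functions ('n \<Rightarrow> bool) \<Rightarrow> complex, where True is spin up
  (first basis vector of C^2) and False is spin down.\<close>

type_synonym ('n) wf = "real^3^'n \<Rightarrow> ('n \<Rightarrow> bool) \<Rightarrow> complex"

text \<open>Pauli matrices, entries indexed by (row, column), True = first index.\<close>
definition pauli :: "3 \<Rightarrow> bool \<Rightarrow> bool \<Rightarrow> complex" where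
  "pauli k a b =
     (if k = 1 then (if a = b then 0 else 1)
      else if k = 2 then (if a = b then 0 else if a then - \<i> else \<i>)
      else (if a = b then (if a then 1 else -1) else 0))"

definition pdj :: "'n::finite \<Rightarrow> 3 \<Rightarrow> 'n wf \<Rightarrow> 'n wf" where
  "pdj j k \<psi> x s = dirderiv (\<chi> i. if i = j then axis k 1 else 0) (\<lambda>y. \<psi> y s) x"

definition kinmom :: "(real^3 \<Rightarrow> real^3) \<Rightarrow> real \<Rightarrow> 'n::finite \<Rightarrow> 3 \<Rightarrow> 'n wf \<Rightarrow> 'n wf" where
  "kinmom A q j k \<psi> x s = - \<i> * pdj j k \<psi> x s - complex_of_real (q * (A (x $ j) $ k)) * \<psi> x s"

definition spinB :: "(real^3 \<Rightarrow> real^3) \<Rightarrow> 'n::finite \<Rightarrow> 'n wf \<Rightarrow> 'n wf" where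
  "spinB B j \<psi> x s = (\<Sum>k\<in>UNIV. \<Sum>b\<in>UNIV.
      complex_of_real (B (x $ j) $ k) * pauli k (s j) b * \<psi> x (s(j := b)))"

definition pauliH :: "('n::finite \<Rightarrow> real) \<Rightarrow> ('n \<Rightarrow> real) \<Rightarrow> (real^3 \<Rightarrow> real^3) \<Rightarrow> 'n wf \<Rightarrow> 'n wf" where
  "pauliH m q A \<psi> x s = (\<Sum>j\<in>UNIV. complex_of_real (1 / (2 * m j)) *
      ((\<Sum>k\<in>UNIV. kinmom A (q j) j k (kinmom A (q j) j k \<psi>) x s)
       - complex_of_real (q j) * spinB (curl A) j \<psi> x s))"

definition unitary2 :: "(bool \<Rightarrow> bool \<Rightarrow> complex) \<Rightarrow> bool" where
  "unitary2 U \<longleftrightarrow> (\<forall>a b. (\<Sum>c\<in>UNIV. cnj (U c a) * U c b) = (if a = b then 1 else 0))"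

text \<open>The antiunitary T = (U_c \<otimes> U_s \<otimes> ... \<otimes> U_s) K.\<close>
definition Top :: "real^3^3 \<Rightarrow> (bool \<Rightarrow> bool \<Rightarrow> complex) \<Rightarrow> 'n::finite wf \<Rightarrow> 'n wf" where
  "Top M Us \<psi> x s = (\<Sum>s'\<in>UNIV. (\<Prod>j\<in>UNIV. Us (s j) (s' j)) *
      cnj (\<psi> (\<chi> j. M *v (x $ j)) s'))"

end

theory Submission
  imports Defs
begin

text \<open>\<open>T\<close> maps \<open>x\<^sub>j\<close> to \<open>M x\<^sub>j\<close> and \<open>p\<^sub>j\<close> to \<open>-M p\<^sub>j\<close>, so it turns the kinetic momentum
  \<open>p\<^sub>j - q A(x\<^sub>j)\<close> into \<open>-M (p\<^sub>j - q A'(x\<^sub>j))\<close> with \<open>A' z = - M A (M z)\<close>; as \<open>M\<close> is orthogonal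
  the kinetic energy becomes that of \<open>A'\<close>. The hypothesis on \<open>B\<close> says exactly that
  \<open>curl A' = curl A\<close>, so \<open>A' = A + \<nabla>G\<close> by the Poincare lemma.
  For the spin term, \<open>R = det M \<cdot> M\<close> is a rotation and an involution, hence the identity or the
  rotation by \<open>\<pi>\<close> about an axis \<open>n\<close>. Accordingly \<open>U\<^sub>s = i\<sigma>\<^sub>y\<close> or \<open>U\<^sub>s = (\<sigma>\<cdot>n) i\<sigma>\<^sub>y\<close> satisfies
  \<open>U\<^sub>s \<sigma>\<^sub>k\<^sup>* U\<^sub>s\<^sup>-\<^sup>1 = - \<Sum>\<^sub>l R\<^sub>k\<^sub>l \<sigma>\<^sub>l\<close>, and with \<open>B (M x) = - R B x\<close> this makes \<open>T\<close> commute with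
  \<open>\<sigma>\<^sub>j \<cdot> B(x\<^sub>j)\<close>.\<close>

section \<open>Directional derivatives\<close>

definition line_differentiable :: "('a::real_normed_vector \<Rightarrow> 'b::real_normed_vector) \<Rightarrow> bool" where
  "line_differentiable f \<longleftrightarrow> (\<forall>x v. (\<lambda>t. f (x + t *\<^sub>R v)) differentiable (at 0))"

definition gateaux_differentiable :: "('a::real_normed_vector \<Rightarrow> 'b::real_normed_vector) \<Rightarrow> bool" where
  "gateaux_differentiable f \<longleftrightarrow> line_differentiable f \<and> (\<forall>x. linear (\<lambda>v. dirderiv v f x))"

lemma has_vector_derivative_dirderiv_at:
  assumes "line_differentiable f"
  shows "((\<lambda>t. f (x + t *\<^sub>R v)) has_vector_derivative dirderiv v f (x + t0 *\<^sub>R v)) (at t0)"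
proof -
  let ?h = "\<lambda>u. f ((x + t0 *\<^sub>R v) + u *\<^sub>R v)"
  have "?h differentiable (at 0)"
    using assms unfolding line_differentiable_def by blast
  then have "(?h has_vector_derivative dirderiv v f (x + t0 *\<^sub>R v)) (at 0)"
    unfolding dirderiv_def by (simp add: vector_derivative_works[symmetric])
  moreover have "((\<lambda>t. t - t0) has_vector_derivative 1) (at t0)"
    by (auto intro!: derivative_eq_intros)
  ultimately have "((?h \<circ> (\<lambda>t. t - t0)) has_vector_derivative dirderiv v f (x + t0 *\<^sub>R v)) (at t0)"
    using vector_diff_chain_at by fastforce
  moreover have "?h \<circ> (\<lambda>t. t - t0) = (\<lambda>t. f (x + t *\<^sub>R v))"
    by (auto simp: algebra_simps fun_eq_iff)
  ultimately show ?thesis by simp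
qed

lemma has_vector_derivative_dirderiv:
  "line_differentiable f \<Longrightarrow> ((\<lambda>t. f (x + t *\<^sub>R v)) has_vector_derivative dirderiv v f x) (at 0)"
  using has_vector_derivative_dirderiv_at[of f x v 0] by simp

lemma dirderiv_eqI:
  "((\<lambda>t. f (x + t *\<^sub>R v)) has_vector_derivative D) (at 0) \<Longrightarrow> dirderiv v f x = D"
  unfolding dirderiv_def by (rule vector_derivative_at)

lemma line_differentiableI:
  "(\<And>x v. ((\<lambda>t. f (x + t *\<^sub>R v)) has_vector_derivative D x v) (at 0)) \<Longrightarrow> line_differentiable f"
  unfolding line_differentiable_def using differentiableI_vector by blast

lemma line_differentiable_compose_bounded_linear:
  assumes "line_differentiable f" "bounded_linear L"
  shows "line_differentiable (\<lambda>y. L (f y))"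
  using bounded_linear.has_vector_derivative[OF assms(2) has_vector_derivative_dirderiv[OF assms(1)]]
  by (rule line_differentiableI)

lemma dirderiv_compose_bounded_linear:
  assumes "line_differentiable f" "bounded_linear L"
  shows "dirderiv v (\<lambda>y. L (f y)) x = L (dirderiv v f x)"
  using bounded_linear.has_vector_derivative[OF assms(2) has_vector_derivative_dirderiv[OF assms(1)]]
  by (rule dirderiv_eqI)

lemma line_differentiable_diff:
  assumes "line_differentiable f" "line_differentiable g"
  shows "line_differentiable (\<lambda>y. f y - g y)"
  using has_vector_derivative_diff[OF assms[THEN has_vector_derivative_dirderiv]]
  by (rule line_differentiableI)

lemma dirderiv_diff:
  assumes "line_differentiable f" "line_differentiable g"
  shows "dirderiv v (\<lambda>y. f y - g y) x = dirderiv v f x - dirderiv v g x"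
  using has_vector_derivative_diff[OF assms[THEN has_vector_derivative_dirderiv]]
  by (rule dirderiv_eqI)

lemma line_differentiable_sum:
  assumes "\<And>i. i \<in> I \<Longrightarrow> line_differentiable (f i)"
  shows "line_differentiable (\<lambda>y. \<Sum>i\<in>I. f i y)"
  using has_vector_derivative_sum[OF has_vector_derivative_dirderiv[OF assms]]
  by (rule line_differentiableI)

lemma dirderiv_sum:
  assumes "\<And>i. i \<in> I \<Longrightarrow> line_differentiable (f i)"
  shows "dirderiv v (\<lambda>y. \<Sum>i\<in>I. f i y) x = (\<Sum>i\<in>I. dirderiv v (f i) x)"
  using has_vector_derivative_sum[OF has_vector_derivative_dirderiv[OF assms]]
  by (rule dirderiv_eqI)

lemma line_differentiable_mult:
  fixes f g :: "'a::real_normed_vector \<Rightarrow> 'b::real_normed_algebra"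
  assumes "line_differentiable f" "line_differentiable g"
  shows "line_differentiable (\<lambda>y. f y * g y)"
  using has_vector_derivative_mult[OF assms[THEN has_vector_derivative_dirderiv]]
  by (rule line_differentiableI)

lemma dirderiv_mult:
  fixes f g :: "'a::real_normed_vector \<Rightarrow> 'b::real_normed_algebra"
  assumes "line_differentiable f" "line_differentiable g"
  shows "dirderiv v (\<lambda>y. f y * g y) x = f x * dirderiv v g x + dirderiv v f x * g x"
  using has_vector_derivative_mult[OF assms[THEN has_vector_derivative_dirderiv]]
  by (intro dirderiv_eqI) simp

lemma line_differentiable_compose_linear:
  "line_differentiable f \<Longrightarrow> linear T \<Longrightarrow> line_differentiable (\<lambda>y. f (T y))"
  by (intro line_differentiableI[where D = "\<lambda>x v. dirderiv (T v) f (T x)"])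
    (simp add: has_vector_derivative_dirderiv linear_add linear_scale)

lemma dirderiv_compose_linear:
  "linear T \<Longrightarrow> dirderiv v (\<lambda>y. f (T y)) x = dirderiv (T v) f (T x)"
  unfolding dirderiv_def by (simp add: linear_add linear_scale)

lemma dirderiv_scaleR_direction:
  assumes "line_differentiable f"
  shows "dirderiv (c *\<^sub>R v) f x = c *\<^sub>R dirderiv v f x"
proof -
  have "((\<lambda>t. c * t) has_vector_derivative c) (at 0)"
    by (auto intro!: derivative_eq_intros)
  then have "(((\<lambda>u. f (x + u *\<^sub>R v)) \<circ> (\<lambda>t. c * t)) has_vector_derivative c *\<^sub>R dirderiv v f x) (at 0)"
    using vector_diff_chain_at has_vector_derivative_dirderiv[OF assms] by fastforce
  then show ?thesis
    by (intro dirderiv_eqI) (simp add: o_def mult.commute)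
qed

lemma norm_diff_le_of_vector_derivative_bound:
  fixes k :: "real \<Rightarrow> 'b::real_normed_vector"
  assumes "\<And>s. s \<in> closed_segment 0 t \<Longrightarrow> (k has_vector_derivative k' s) (at s)"
    and "\<And>s. s \<in> closed_segment 0 t \<Longrightarrow> norm (k' s) \<le> B"
  shows "norm (k t - k 0) \<le> B * \<bar>t\<bar>"
proof -
  have "0 \<le> B"
    using assms(2)[of 0] by (rule order_trans[OF norm_ge_zero]) simp
  have "norm (k t - k 0) \<le> B * norm (t - 0)"
  proof (rule differentiable_bound[of "closed_segment 0 t" k "\<lambda>s h. h *\<^sub>R k' s" B t 0])
    fix s assume s: "s \<in> closed_segment 0 t"
    show "(k has_derivative (\<lambda>h. h *\<^sub>R k' s)) (at s within closed_segment 0 t)"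
      using assms(1)[OF s] has_vector_derivative_at_within unfolding has_vector_derivative_def by blast
    show "onorm (\<lambda>h. h *\<^sub>R k' s) \<le> B"
      by (rule onorm_bound[OF \<open>0 \<le> B\<close>])
        (use assms(2)[OF s] in \<open>auto simp: mult.commute[of B] intro: mult_left_mono\<close>)
  qed auto
  then show ?thesis by simp
qed

lemma norm_increment_le_dirderiv_bound:
  assumes ld: "line_differentiable f"
    and bound: "\<And>s. s \<in> closed_segment 0 t \<Longrightarrow> norm (dirderiv w f (y + s *\<^sub>R w) - D) \<le> B"
  shows "norm (f (y + t *\<^sub>R w) - f y - t *\<^sub>R D) \<le> B * \<bar>t\<bar>"
proof -
  define k where "k = (\<lambda>s. f (y + s *\<^sub>R w) - s *\<^sub>R D)"
  have "(k has_vector_derivative dirderiv w f (y + s *\<^sub>R w) - D) (at s)" for s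
    unfolding k_def
    by (rule has_vector_derivative_eq_rhs[OF has_vector_derivative_diff[OF
          has_vector_derivative_dirderiv_at[OF ld]
          has_vector_derivative_scaleR[OF DERIV_ident has_vector_derivative_const]]]) simp
  then have "norm (k t - k 0) \<le> B * \<bar>t\<bar>"
    using bound by (rule norm_diff_le_of_vector_derivative_bound)
  then show ?thesis
    by (simp add: k_def algebra_simps)
qed

lemma increment_near_dirderiv:
  assumes ld: "line_differentiable f" and cw: "continuous_on UNIV (dirderiv w f)" and e: "e > 0"
  obtains d where "d > 0" and "\<And>t. \<bar>t\<bar> < d \<Longrightarrow>
    norm (f (x + t *\<^sub>R v + t *\<^sub>R w) - f (x + t *\<^sub>R v) - t *\<^sub>R dirderiv w f x) \<le> e * \<bar>t\<bar>"
proof -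
  obtain r where "r > 0" and r: "\<And>y. dist y x < r \<Longrightarrow> dist (dirderiv w f y) (dirderiv w f x) < e"
    using cw e unfolding continuous_on_iff by (metis UNIV_I)
  define d where "d = r / (norm v + norm w + 1)"
  have nvw: "norm v + norm w + 1 > 0" by (simp add: add_nonneg_pos)
  show thesis
  proof (rule that)
    show "d > 0" unfolding d_def using \<open>r > 0\<close> nvw by simp
    fix t :: real assume t: "\<bar>t\<bar> < d"
    have "norm (dirderiv w f (x + t *\<^sub>R v + s *\<^sub>R w) - dirderiv w f x) \<le> e"
      if "s \<in> closed_segment 0 t" for s
    proof -
      have "\<bar>s\<bar> \<le> \<bar>t\<bar>" using that by (auto simp: closed_segment_eq_real_ivl split: if_splits)
      have "norm (t *\<^sub>R v + s *\<^sub>R w) \<le> \<bar>t\<bar> * norm v + \<bar>s\<bar> * norm w"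
        by (metis norm_scaleR norm_triangle_ineq)
      also have "\<dots> \<le> \<bar>t\<bar> * (norm v + norm w + 1)"
        using mult_right_mono[OF \<open>\<bar>s\<bar> \<le> \<bar>t\<bar>\<close> norm_ge_zero[of w]] by (simp add: algebra_simps)
      also have "\<dots> < r"
        using t nvw mult_strict_right_mono[of "\<bar>t\<bar>" d "norm v + norm w + 1"] by (simp add: d_def)
      finally have "dist (x + t *\<^sub>R v + s *\<^sub>R w) x < r" by (simp add: dist_norm add.assoc)
      from r[OF this] show ?thesis by (simp add: dist_norm)
    qed
    then show "norm (f (x + t *\<^sub>R v + t *\<^sub>R w) - f (x + t *\<^sub>R v) - t *\<^sub>R dirderiv w f x) \<le> e * \<bar>t\<bar>"
      using ld by (intro norm_increment_le_dirderiv_bound)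
  qed
qed

text \<open>Compare the increment along \<open>v + w\<close> with the increment along \<open>v\<close> followed by the one
  along \<open>w\<close>; continuity of \<open>\<partial>\<^sub>w f\<close> makes the second one uniformly close to \<open>t \<partial>\<^sub>w f x\<close>.\<close>
lemma dirderiv_add_direction:
  assumes ld: "line_differentiable f" and cw: "continuous_on UNIV (dirderiv w f)"
  shows "dirderiv (v + w) f x = dirderiv v f x + dirderiv w f x"
proof -
  define Dv where "Dv = dirderiv v f x"
  define Dw where "Dw = dirderiv w f x"
  have hv: "((\<lambda>t. f (x + t *\<^sub>R v)) has_derivative (\<lambda>h. h *\<^sub>R Dv)) (at 0)"
    using has_vector_derivative_dirderiv[OF ld, of x v] unfolding Dv_def has_vector_derivative_def .
  have "((\<lambda>t. f (x + t *\<^sub>R (v + w))) has_derivative (\<lambda>h. h *\<^sub>R (Dv + Dw))) (at 0)"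
    unfolding has_derivative_at_alt
  proof (intro conjI allI impI)
    show "bounded_linear (\<lambda>h. h *\<^sub>R (Dv + Dw))" by (rule bounded_linear_scaleR_left)
    fix e :: real assume e: "e > 0"
    obtain d1 where "d1 > 0" and d1: "\<And>t. norm (t - 0) < d1 \<Longrightarrow>
        norm (f (x + t *\<^sub>R v) - f (x + 0 *\<^sub>R v) - (t - 0) *\<^sub>R Dv) \<le> e/2 * norm (t - 0)"
      using hv[unfolded has_derivative_at_alt] e by (metis half_gt_zero)
    obtain d2 where "d2 > 0" and d2: "\<And>t. \<bar>t\<bar> < d2 \<Longrightarrow>
        norm (f (x + t *\<^sub>R v + t *\<^sub>R w) - f (x + t *\<^sub>R v) - t *\<^sub>R Dw) \<le> e/2 * \<bar>t\<bar>"
      using increment_near_dirderiv[OF ld cw, of "e/2" x v] e unfolding Dw_def by auto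
    show "\<exists>d>0. \<forall>t. norm (t - 0) < d \<longrightarrow>
      norm (f (x + t *\<^sub>R (v + w)) - f (x + 0 *\<^sub>R (v + w)) - (t - 0) *\<^sub>R (Dv + Dw)) \<le> e * norm (t - 0)"
    proof (intro exI[of _ "min d1 d2"] conjI allI impI)
      show "min d1 d2 > 0" using \<open>d1 > 0\<close> \<open>d2 > 0\<close> by simp
      fix t :: real assume t: "norm (t - 0) < min d1 d2"
      have "f (x + t *\<^sub>R (v + w)) - f (x + 0 *\<^sub>R (v + w)) - (t - 0) *\<^sub>R (Dv + Dw)
          = (f (x + t *\<^sub>R v + t *\<^sub>R w) - f (x + t *\<^sub>R v) - t *\<^sub>R Dw) + (f (x + t *\<^sub>R v) - f x - t *\<^sub>R Dv)"
        by (simp add: algebra_simps)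
      then show "norm (f (x + t *\<^sub>R (v + w)) - f (x + 0 *\<^sub>R (v + w)) - (t - 0) *\<^sub>R (Dv + Dw))
          \<le> e * norm (t - 0)"
        using d1[of t] d2[of t] t by (simp only:) (rule norm_triangle_le, simp)
    qed
  qed
  then have "((\<lambda>t. f (x + t *\<^sub>R (v + w))) has_vector_derivative (Dv + Dw)) (at 0)"
    unfolding has_vector_derivative_def .
  then show ?thesis
    unfolding Dv_def Dw_def by (rule dirderiv_eqI)
qed

lemma gateaux_differentiableI:
  "line_differentiable f \<Longrightarrow> (\<And>x. linear (\<lambda>v. dirderiv v f x)) \<Longrightarrow> gateaux_differentiable f"
  unfolding gateaux_differentiable_def by blast

lemma gateaux_differentiable_line_differentiable:
  "gateaux_differentiable f \<Longrightarrow> line_differentiable f"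
  unfolding gateaux_differentiable_def by blast

lemma gateaux_differentiable_linear:
  "gateaux_differentiable f \<Longrightarrow> linear (\<lambda>v. dirderiv v f x)"
  unfolding gateaux_differentiable_def by blast

lemma gateaux_differentiable_compose_bounded_linear:
  assumes "gateaux_differentiable f" "bounded_linear L"
  shows "gateaux_differentiable (\<lambda>y. L (f y))"
proof (rule gateaux_differentiableI)
  have f: "line_differentiable f"
    using assms(1) by (rule gateaux_differentiable_line_differentiable)
  show "line_differentiable (\<lambda>y. L (f y))"
    using f assms(2) by (rule line_differentiable_compose_bounded_linear)
  fix x
  have "linear (L \<circ> (\<lambda>v. dirderiv v f x))"
    using gateaux_differentiable_linear[OF assms(1)] bounded_linear.linear[OF assms(2)]
    by (rule linear_compose)
  then show "linear (\<lambda>v. dirderiv v (\<lambda>y. L (f y)) x)"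
    unfolding dirderiv_compose_bounded_linear[OF f assms(2)] comp_def .
qed

lemma gateaux_differentiable_compose_linear:
  assumes "gateaux_differentiable f" "linear T"
  shows "gateaux_differentiable (\<lambda>y. f (T y))"
proof (rule gateaux_differentiableI)
  show "line_differentiable (\<lambda>y. f (T y))"
    using gateaux_differentiable_line_differentiable[OF assms(1)] assms(2)
    by (rule line_differentiable_compose_linear)
  fix x
  have "linear ((\<lambda>v. dirderiv v f (T x)) \<circ> T)"
    using assms(2) gateaux_differentiable_linear[OF assms(1)] by (rule linear_compose)
  then show "linear (\<lambda>v. dirderiv v (\<lambda>y. f (T y)) x)"
    unfolding dirderiv_compose_linear[OF assms(2)] comp_def .
qed

lemma gateaux_differentiable_diff:
  assumes "gateaux_differentiable f" "gateaux_differentiable g"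
  shows "gateaux_differentiable (\<lambda>y. f y - g y)"
proof (rule gateaux_differentiableI)
  note ld = assms[THEN gateaux_differentiable_line_differentiable]
  show "line_differentiable (\<lambda>y. f y - g y)" using ld by (rule line_differentiable_diff)
  show "linear (\<lambda>v. dirderiv v (\<lambda>y. f y - g y) x)" for x
    unfolding dirderiv_diff[OF ld]
    by (intro linear_compose_sub assms[THEN gateaux_differentiable_linear])
qed

lemma gateaux_differentiable_sum:
  assumes "\<And>i. i \<in> I \<Longrightarrow> gateaux_differentiable (f i)"
  shows "gateaux_differentiable (\<lambda>y. \<Sum>i\<in>I. f i y)"
proof (rule gateaux_differentiableI)
  have ld: "\<And>i. i \<in> I \<Longrightarrow> line_differentiable (f i)"
    using assms gateaux_differentiable_line_differentiable by blast
  show "line_differentiable (\<lambda>y. \<Sum>i\<in>I. f i y)" using ld by (rule line_differentiable_sum)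
  fix x
  have "\<forall>i\<in>I. linear (\<lambda>v. dirderiv v (f i) x)"
    using assms gateaux_differentiable_linear by blast
  then have "linear (\<lambda>v. \<Sum>i\<in>I. dirderiv v (f i) x)"
    by (rule linear_compose_sum)
  then show "linear (\<lambda>v. dirderiv v (\<lambda>y. \<Sum>i\<in>I. f i y) x)"
    by (simp only: dirderiv_sum[OF ld])
qed

lemma gateaux_differentiable_mult:
  fixes f g :: "'a::real_normed_vector \<Rightarrow> 'b::real_normed_algebra"
  assumes "gateaux_differentiable f" "gateaux_differentiable g"
  shows "gateaux_differentiable (\<lambda>y. f y * g y)"
proof (rule gateaux_differentiableI)
  note ld = assms[THEN gateaux_differentiable_line_differentiable]
  show "line_differentiable (\<lambda>y. f y * g y)" using ld by (rule line_differentiable_mult)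
  fix x
  have "linear ((\<lambda>z. f x * z) \<circ> (\<lambda>v. dirderiv v g x))"
    using gateaux_differentiable_linear[OF assms(2)] bounded_linear.linear[OF bounded_linear_mult_right]
    by (rule linear_compose)
  moreover have "linear ((\<lambda>z. z * g x) \<circ> (\<lambda>v. dirderiv v f x))"
    using gateaux_differentiable_linear[OF assms(1)] bounded_linear.linear[OF bounded_linear_mult_left]
    by (rule linear_compose)
  ultimately show "linear (\<lambda>v. dirderiv v (\<lambda>y. f y * g y) x)"
    unfolding dirderiv_mult[OF ld] comp_def by (rule linear_compose_add)
qed

lemma iter_dirderiv_append: "iter_dirderiv (vs @ [v]) f = iter_dirderiv vs (dirderiv v f)"
  by (induction vs) auto

lemma smooth_iff:
  "smooth f \<longleftrightarrow> (\<forall>vs. continuous_on UNIV (iter_dirderiv vs f) \<and> line_differentiable (iter_dirderiv vs f))"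
  unfolding smooth_def line_differentiable_def by (intro iff_allI) blast

lemma smooth_line_differentiable: "smooth f \<Longrightarrow> line_differentiable f"
  unfolding smooth_iff by (metis iter_dirderiv.simps(1))

lemma smooth_continuous_on: "smooth f \<Longrightarrow> continuous_on UNIV f"
  unfolding smooth_iff by (metis iter_dirderiv.simps(1))

lemma smooth_dirderiv: "smooth f \<Longrightarrow> smooth (dirderiv v f)"
  unfolding smooth_iff by (metis iter_dirderiv_append)

lemma smooth_gateaux_differentiable: "smooth f \<Longrightarrow> gateaux_differentiable f"
  by (intro gateaux_differentiableI linearI smooth_line_differentiable)
    (simp_all add: dirderiv_add_direction dirderiv_scaleR_direction smooth_line_differentiable
      smooth_continuous_on smooth_dirderiv)

lemma smooth_compose_bounded_linear:
  assumes "smooth f" "bounded_linear L"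
  shows "smooth (\<lambda>y. L (f y))"
proof -
  have "iter_dirderiv vs (\<lambda>y. L (f y)) = (\<lambda>y. L (iter_dirderiv vs f y))" for vs
    using assms(1)
    by (induction vs) (auto simp: smooth_iff dirderiv_compose_bounded_linear[OF _ assms(2)])
  then show ?thesis
    using assms unfolding smooth_iff
    by (simp add: bounded_linear.continuous_on line_differentiable_compose_bounded_linear)
qed

lemma smooth_compose_linear:
  assumes "smooth f" "linear T"
  shows "smooth (\<lambda>y. f (T y))"
proof -
  have "iter_dirderiv vs (\<lambda>y. f (T y)) = (\<lambda>y. iter_dirderiv (map T vs) f (T y))" for vs
    by (induction vs) (auto simp: dirderiv_compose_linear[OF assms(2)])
  moreover have "continuous_on UNIV T"
    using assms(2) by (simp add: linear_continuous_on linear_conv_bounded_linear)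
  ultimately show ?thesis
    using assms unfolding smooth_iff
    by (auto intro: continuous_on_compose2 line_differentiable_compose_linear)
qed

lemma smooth_diff:
  assumes "smooth f" "smooth g"
  shows "smooth (\<lambda>y. f y - g y)"
proof -
  have "iter_dirderiv vs (\<lambda>y. f y - g y) = (\<lambda>y. iter_dirderiv vs f y - iter_dirderiv vs g y)" for vs
    using assms by (induction vs) (auto simp: smooth_iff dirderiv_diff)
  then show ?thesis
    using assms unfolding smooth_iff by (simp add: continuous_on_diff line_differentiable_diff)
qed

section \<open>Potentials of curl-free fields\<close>

lemma has_vector_derivative_radial_integral:
  fixes F :: "'a::euclidean_space \<Rightarrow> 'a"
  assumes sF: "smooth F"
  shows "((\<lambda>s. integral (cbox 0 1) (\<lambda>t. F (t *\<^sub>R (x + s *\<^sub>R v)) \<bullet> (x + s *\<^sub>R v)))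
           has_vector_derivative
         integral (cbox 0 1) (\<lambda>t. (t *\<^sub>R dirderiv v F (t *\<^sub>R x)) \<bullet> x + F (t *\<^sub>R x) \<bullet> v)) (at 0)"
proof -
  have ldF: "line_differentiable F" using sF by (rule smooth_line_differentiable)
  have cF: "continuous_on UNIV F" using sF by (rule smooth_continuous_on)
  have cdF: "continuous_on UNIV (dirderiv w F)" for w
    using sF by (intro smooth_continuous_on smooth_dirderiv)
  define fx where "fx = (\<lambda>s t. (t *\<^sub>R dirderiv v F (t *\<^sub>R (x + s *\<^sub>R v))) \<bullet> (x + s *\<^sub>R v)
      + F (t *\<^sub>R (x + s *\<^sub>R v)) \<bullet> v)"
  have dF: "((\<lambda>s. F (t *\<^sub>R (x + s *\<^sub>R v))) has_vector_derivative t *\<^sub>R dirderiv v F (t *\<^sub>R (x + s0 *\<^sub>R v))) (at s0)"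
    for s0 t :: real
  proof -
    have "((\<lambda>s. F (t *\<^sub>R x + s *\<^sub>R (t *\<^sub>R v))) has_vector_derivative
        dirderiv (t *\<^sub>R v) F (t *\<^sub>R x + s0 *\<^sub>R (t *\<^sub>R v))) (at s0)"
      by (rule has_vector_derivative_dirderiv_at[OF ldF])
    then show ?thesis
      by (simp add: dirderiv_scaleR_direction[OF ldF] scaleR_add_right mult.commute)
  qed
  have line: "((\<lambda>s. x + s *\<^sub>R v) has_vector_derivative v) (at s0 within UNIV)" for s0
    by (auto intro!: derivative_eq_intros)
  have "((\<lambda>s. F (t *\<^sub>R (x + s *\<^sub>R v)) \<bullet> (x + s *\<^sub>R v)) has_vector_derivative fx s0 t) (at s0 within UNIV)"
    for s0 t :: real
    using bounded_bilinear.has_vector_derivative[OF bounded_bilinear_inner dF[of t s0] line[of s0]]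
    unfolding fx_def by (simp add: add.commute)
  moreover have "(\<lambda>t. F (t *\<^sub>R (x + s *\<^sub>R v)) \<bullet> (x + s *\<^sub>R v)) integrable_on cbox 0 1" for s
    by (intro integrable_continuous continuous_intros continuous_on_compose2[OF cF]) auto
  moreover have "continuous_on (UNIV \<times> cbox 0 1) (\<lambda>(s, t). fx s t)"
    unfolding fx_def split_beta
    by (intro continuous_intros continuous_on_compose2[OF cdF] continuous_on_compose2[OF cF]) auto
  ultimately have "((\<lambda>s. integral (cbox 0 1) (\<lambda>t. F (t *\<^sub>R (x + s *\<^sub>R v)) \<bullet> (x + s *\<^sub>R v)))
        has_vector_derivative integral (cbox 0 1) (fx 0)) (at 0 within UNIV)"
    by (intro leibniz_rule_vector_derivative) auto
  then show ?thesis
    by (simp add: fx_def)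
qed

text \<open>Symmetry of the Jacobian makes the integrand the \<open>t\<close>-derivative of \<open>t F (t x) \<bullet> v\<close>.\<close>
lemma integral_radial_derivative:
  fixes F :: "'a::euclidean_space \<Rightarrow> 'a"
  assumes ldF: "line_differentiable F" and sym: "\<And>x u w. dirderiv u F x \<bullet> w = dirderiv w F x \<bullet> u"
  shows "integral (cbox 0 1) (\<lambda>t. (t *\<^sub>R dirderiv v F (t *\<^sub>R x)) \<bullet> x + F (t *\<^sub>R x) \<bullet> v) = F x \<bullet> v"
proof -
  define H where "H = (\<lambda>t::real. t * (F (t *\<^sub>R x) \<bullet> v))"
  have "(H has_vector_derivative (t *\<^sub>R dirderiv v F (t *\<^sub>R x)) \<bullet> x + F (t *\<^sub>R x) \<bullet> v) (at t within {0..1})"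
    for t
  proof -
    have "((\<lambda>t. F (0 + t *\<^sub>R x)) has_vector_derivative dirderiv x F (0 + t *\<^sub>R x)) (at t within {0..1})"
      using has_vector_derivative_dirderiv_at[OF ldF] has_vector_derivative_at_within by blast
    then have "((\<lambda>t. F (t *\<^sub>R x) \<bullet> v) has_vector_derivative dirderiv x F (t *\<^sub>R x) \<bullet> v) (at t within {0..1})"
      using bounded_linear.has_vector_derivative[OF bounded_linear_inner_left] by fastforce
    from has_vector_derivative_mult[OF has_vector_derivative_id this]
    show ?thesis
      unfolding H_def using sym[of v "t *\<^sub>R x" x] by simp
  qed
  then have "((\<lambda>t. (t *\<^sub>R dirderiv v F (t *\<^sub>R x)) \<bullet> x + F (t *\<^sub>R x) \<bullet> v) has_integral (H 1 - H 0)) {0..1}"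
    by (intro fundamental_theorem_of_calculus) auto
  then show ?thesis
    unfolding H_def by (simp add: integral_unique)
qed

lemma poincare_lemma:
  fixes F :: "'a::euclidean_space \<Rightarrow> 'a"
  assumes sF: "smooth F" and sym: "\<And>x u w. dirderiv u F x \<bullet> w = dirderiv w F x \<bullet> u"
  obtains G where "smooth G" and "\<And>v x. dirderiv v G x = F x \<bullet> v"
proof
  define G where "G = (\<lambda>x. integral (cbox 0 (1::real)) (\<lambda>t. F (t *\<^sub>R x) \<bullet> x))"
  have hvd: "((\<lambda>s. G (x + s *\<^sub>R v)) has_vector_derivative F x \<bullet> v) (at 0)" for x v
    using has_vector_derivative_radial_integral[OF sF, of x v]
    unfolding G_def integral_radial_derivative[OF smooth_line_differentiable[OF sF] sym] .
  show dG: "dirderiv v G x = F x \<bullet> v" for v x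
    using hvd by (rule dirderiv_eqI)
  have "continuous_on UNIV G"
    unfolding G_def using smooth_continuous_on[OF sF]
    by (intro integral_continuous_on_param)
      (auto intro!: continuous_intros intro: continuous_on_compose2 simp: split_beta)
  moreover have "line_differentiable G"
    using hvd by (rule line_differentiableI)
  moreover have "smooth (dirderiv v G)" for v
  proof -
    have "smooth (\<lambda>x. F x \<bullet> v)"
      using sF bounded_linear_inner_left by (rule smooth_compose_bounded_linear)
    then show ?thesis by (simp add: dG[abs_def])
  qed
  ultimately show "smooth G"
    unfolding smooth_iff by (metis iter_dirderiv.simps(1) iter_dirderiv_append rev_exhaust)
qed

lemma pd3_component:
  assumes "line_differentiable V"
  shows "pd3 i (\<lambda>y. V y $ a) x = dirderiv (axis i 1) V x $ a"
  unfolding pd3_def by (rule dirderiv_compose_bounded_linear[OF assms bounded_linear_vec_nth])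

lemma linear_expansion:
  fixes f :: "real^'n \<Rightarrow> 'b::real_vector"
  assumes "linear f"
  shows "f u = (\<Sum>b\<in>UNIV. u $ b *\<^sub>R f (axis b 1))"
proof -
  have "f u = f (\<Sum>b\<in>UNIV. u $ b *s axis b 1)"
    by (simp only: basis_expansion)
  then show ?thesis
    by (simp add: scalar_mult_eq_scaleR linear_sum[OF assms] linear_scale[OF assms])
qed

lemma curl_free_imp_grad:
  assumes sF: "smooth F" and curl: "\<And>x. curl F x = 0"
  obtains G where "smooth G" and "grad G = F"
proof -
  have gF: "gateaux_differentiable F" using sF by (rule smooth_gateaux_differentiable)
  note ldF = gateaux_differentiable_line_differentiable[OF gF]
  define J where "J = (\<lambda>x a b. dirderiv (axis b 1) F x $ a)"
  have "\<forall>a b. J x a b = J x b a" for x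
    using curl[of x] unfolding curl_def pd3_component[OF ldF]
    by (simp add: vec_eq_iff forall_3 J_def)
  then have symJ: "J x a b = J x b a" for x a b
    by blast
  have expand: "dirderiv u F x \<bullet> w = (\<Sum>b\<in>UNIV. \<Sum>a\<in>UNIV. u $ b * J x a b * w $ a)" for u w x
    unfolding linear_expansion[OF gateaux_differentiable_linear[OF gF], of u]
    by (simp add: inner_sum_left inner_vec_def sum_distrib_left J_def mult_ac) (rule sum.swap)
  have sym: "dirderiv u F x \<bullet> w = dirderiv w F x \<bullet> u" for u w x
  proof -
    have "(\<Sum>b\<in>UNIV. \<Sum>a\<in>UNIV. u $ b * J x a b * w $ a) = (\<Sum>b\<in>UNIV. \<Sum>a\<in>UNIV. w $ a * J x b a * u $ b)"
      by (simp add: symJ[of x] mult_ac)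
    also have "\<dots> = (\<Sum>a\<in>UNIV. \<Sum>b\<in>UNIV. w $ a * J x b a * u $ b)"
      by (rule sum.swap)
    finally show ?thesis unfolding expand .
  qed
  obtain G where "smooth G" and dG: "\<And>v x. dirderiv v G x = F x \<bullet> v"
    using poincare_lemma[OF sF sym] by blast
  have "grad G = F"
    by (simp add: fun_eq_iff vec_eq_iff grad_def pd3_def dG inner_axis)
  with \<open>smooth G\<close> show ?thesis by (rule that)
qed

lemma curl_diff:
  assumes "line_differentiable A" "line_differentiable B"
  shows "curl (\<lambda>y. A y - B y) x = curl A x - curl B x"
proof -
  have "pd3 i (\<lambda>y. (A y - B y) $ a) x = pd3 i (\<lambda>y. A y $ a) x - pd3 i (\<lambda>y. B y $ a) x" for i a
    unfolding pd3_component[OF line_differentiable_diff[OF assms]] pd3_component[OF assms(1)]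
      pd3_component[OF assms(2)] dirderiv_diff[OF assms] by simp
  then show ?thesis
    unfolding curl_def by (simp add: vec_eq_iff forall_3 vector_3)
qed

lemma gauge_equivalent_if_curl_eq:
  assumes sA: "smooth A" and sA': "smooth A'" and "curl A' = curl A"
  obtains G where "smooth G" and "(\<lambda>y. A y + grad G y) = A'"
proof -
  have "curl (\<lambda>y. A' y - A y) x = 0" for x
    using assms by (simp add: curl_diff smooth_line_differentiable)
  with smooth_diff[OF sA' sA] obtain G where "smooth G" and "grad G = (\<lambda>y. A' y - A y)"
    by (rule curl_free_imp_grad)
  then show ?thesis
    using that by (simp add: fun_eq_iff)
qed

section \<open>The curl under a reflection\<close>

lemma symmetric_if_orthogonal_involution:
  assumes "orthogonal_matrix M" "M ** M = mat 1"
  shows "transpose M = M"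
proof -
  have "transpose M = transpose M ** (M ** M)" by (simp add: assms(2))
  also have "\<dots> = M"
    using assms(1) by (simp add: matrix_mul_assoc orthogonal_matrix_def)
  finally show ?thesis .
qed

lemma symmetric_matrix_entry: "transpose M = M \<Longrightarrow> M $ a $ b = M $ b $ a"
  by (metis transpose_transpose transpose_def vec_lambda_beta)

lemma symmetric_involution_entries:
  fixes M :: "real^3^3"
  assumes sym: "transpose M = M" and inv: "M ** M = mat 1"
  shows "M$2$1 = M$1$2" "M$3$1 = M$1$3" "M$3$2 = M$2$3"
    and "M$1$1 * M$1$1 + M$1$2 * M$1$2 + M$1$3 * M$1$3 = 1"
    "M$1$2 * M$1$2 + M$2$2 * M$2$2 + M$2$3 * M$2$3 = 1"
    "M$1$3 * M$1$3 + M$2$3 * M$2$3 + M$3$3 * M$3$3 = 1"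
    "M$1$1 * M$1$2 + M$1$2 * M$2$2 + M$1$3 * M$2$3 = 0"
    "M$1$1 * M$1$3 + M$1$2 * M$2$3 + M$1$3 * M$3$3 = 0"
    "M$1$2 * M$1$3 + M$2$2 * M$2$3 + M$2$3 * M$3$3 = 0"
proof -
  show r: "M$2$1 = M$1$2" "M$3$1 = M$1$3" "M$3$2 = M$2$3"
    using symmetric_matrix_entry[OF sym] by auto
  have "(\<Sum>k\<in>UNIV. M$a$k * M$k$b) = (if a = b then 1 else 0)" for a b
    using arg_cong[OF inv, of "\<lambda>X. X$a$b"] by (simp add: matrix_matrix_mult_def mat_def)
  note sq = this[unfolded sum_3, simplified r]
  show "M$1$1 * M$1$1 + M$1$2 * M$1$2 + M$1$3 * M$1$3 = 1"
    "M$1$2 * M$1$2 + M$2$2 * M$2$2 + M$2$3 * M$2$3 = 1"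
    "M$1$3 * M$1$3 + M$2$3 * M$2$3 + M$3$3 * M$3$3 = 1"
    "M$1$1 * M$1$2 + M$1$2 * M$2$2 + M$1$3 * M$2$3 = 0"
    "M$1$1 * M$1$3 + M$1$2 * M$2$3 + M$1$3 * M$3$3 = 0"
    "M$1$2 * M$1$3 + M$2$2 * M$2$3 + M$2$3 * M$3$3 = 0"
    using sq[of 1 1] sq[of 2 2] sq[of 3 3] sq[of 1 2] sq[of 1 3] sq[of 2 3] by (simp_all add: r)
qed

lemma orthonormal_columns_symmetric_involution:
  assumes sym: "transpose M = M" and inv: "M ** M = mat 1"
  shows "(\<Sum>k\<in>UNIV. M$k$n * M$k$l) = (if n = l then 1 else 0)"
proof -
  have "(\<Sum>k\<in>UNIV. M$k$n * M$k$l) = (M ** M) $ n $ l"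
    by (simp add: matrix_matrix_mult_def symmetric_matrix_entry[OF sym, of _ n])
  then show ?thesis
    by (simp add: inv mat_def)
qed

text \<open>The cofactor matrix is \<open>det M \<cdot> M\<^sup>-\<^sup>T = det M \<cdot> M\<close>.\<close>
lemma cofactors_symmetric_involution:
  fixes M :: "real^3^3"
  assumes sym: "transpose M = M" and inv: "M ** M = mat 1"
  shows "M$2$2 * M$3$3 - M$2$3 * M$2$3 = det M * M$1$1"
    "M$2$3 * M$1$3 - M$1$2 * M$3$3 = det M * M$1$2"
    "M$1$2 * M$2$3 - M$2$2 * M$1$3 = det M * M$1$3"
    "M$1$1 * M$3$3 - M$1$3 * M$1$3 = det M * M$2$2"
    "M$1$3 * M$1$2 - M$1$1 * M$2$3 = det M * M$2$3"
    "M$1$1 * M$2$2 - M$1$2 * M$1$2 = det M * M$3$3"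
proof -
  note e = symmetric_involution_entries[OF sym inv]
  have d: "det M = M$1$1 * M$2$2 * M$3$3 + M$1$2 * M$2$3 * M$1$3 + M$1$3 * M$1$2 * M$2$3
              - M$1$1 * M$2$3 * M$2$3 - M$1$2 * M$1$2 * M$3$3 - M$1$3 * M$2$2 * M$1$3"
    unfolding det_3 by (simp add: e(1-3))
  show "M$2$2 * M$3$3 - M$2$3 * M$2$3 = det M * M$1$1"
    "M$2$3 * M$1$3 - M$1$2 * M$3$3 = det M * M$1$2"
    "M$1$2 * M$2$3 - M$2$2 * M$1$3 = det M * M$1$3"
    "M$1$1 * M$3$3 - M$1$3 * M$1$3 = det M * M$2$2"
    "M$1$3 * M$1$2 - M$1$1 * M$2$3 = det M * M$2$3"
    "M$1$1 * M$2$2 - M$1$2 * M$1$2 = det M * M$3$3"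
    using e(4-9) d by algebra+
qed

text \<open>\<open>vector [J 3 2 - J 2 3, \<dots>]\<close> is the axial vector of the antisymmetric part of the matrix \<open>J\<close>;
  conjugating \<open>J\<close> by \<open>M\<close> multiplies it by the cofactor matrix \<open>det M *\<^sub>R M\<close>.\<close>
lemma axial_vector_conjugate_symmetric_involution:
  fixes M :: "real^3^3" and J :: "3 \<Rightarrow> 3 \<Rightarrow> real"
  assumes sym: "transpose M = M" and inv: "M ** M = mat 1"
  defines "K \<equiv> \<lambda>a i. \<Sum>c\<in>UNIV. M$a$c * (\<Sum>e\<in>UNIV. M$e$i * J c e)"
  shows "vector [K 3 2 - K 2 3, K 1 3 - K 3 1, K 2 1 - K 1 2]
       = det M *\<^sub>R (M *v vector [J 3 2 - J 2 3, J 1 3 - J 3 1, J 2 1 - J 1 2])"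
proof -
  note r = symmetric_involution_entries(1-3)[OF sym inv]
  show ?thesis
    unfolding vec_eq_iff forall_3 K_def using cofactors_symmetric_involution[OF sym inv]
    by (simp add: sum_3 matrix_vector_mult_def r) (intro conjI; algebra)
qed

lemma pd3_reflected:
  fixes A :: "real^3 \<Rightarrow> real^3" and M :: "real^3^3"
  assumes gA: "gateaux_differentiable A"
  shows "pd3 i (\<lambda>y. (- (M *v A (M *v y))) $ a) x
       = - (\<Sum>c\<in>UNIV. M$a$c * (\<Sum>e\<in>UNIV. M$e$i * pd3 e (\<lambda>y. A y $ c) (M *v x)))"
proof -
  note ldA = gateaux_differentiable_line_differentiable[OF gA]
  have linM: "linear (\<lambda>z. M *v z)" and blM: "bounded_linear (\<lambda>w. - (M *v w))"
    by (auto intro: bounded_linear_minus matrix_vector_mul_bounded_linear)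
  have ldAM: "line_differentiable (\<lambda>z. A (M *v z))"
    using ldA linM by (rule line_differentiable_compose_linear)
  have "pd3 i (\<lambda>y. (- (M *v A (M *v y))) $ a) x = dirderiv (axis i 1) (\<lambda>z. - (M *v A (M *v z))) x $ a"
    by (rule pd3_component[OF line_differentiable_compose_bounded_linear[OF ldAM blM]])
  also have "\<dots> = (- (M *v dirderiv (M *v axis i 1) A (M *v x))) $ a"
    by (simp add: dirderiv_compose_bounded_linear[OF ldAM blM] dirderiv_compose_linear[OF linM])
  also have "dirderiv (M *v axis i 1) A (M *v x) = (\<Sum>e\<in>UNIV. M$e$i *\<^sub>R dirderiv (axis e 1) A (M *v x))"
    by (subst linear_expansion[OF gateaux_differentiable_linear[OF gA]])
      (simp add: matrix_vector_mult_basis column_def)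
  finally show ?thesis
    by (simp add: pd3_component[OF ldA] matrix_vector_mult_def sum_component)
qed

lemma curl_reflect:
  fixes A :: "real^3 \<Rightarrow> real^3" and M :: "real^3^3"
  assumes gA: "gateaux_differentiable A" and sym: "transpose M = M" and inv: "M ** M = mat 1"
  shows "curl (\<lambda>z. - (M *v A (M *v z))) x = - (det M *\<^sub>R (M *v curl A (M *v x)))"
proof -
  define J where "J = (\<lambda>c e. pd3 e (\<lambda>y. A y $ c) (M *v x))"
  define K where "K = (\<lambda>a i. \<Sum>c\<in>UNIV. M$a$c * (\<Sum>e\<in>UNIV. M$e$i * J c e))"
  have "curl (\<lambda>z. - (M *v A (M *v z))) x = - vector [K 3 2 - K 2 3, K 1 3 - K 3 1, K 2 1 - K 1 2]"
    unfolding curl_def pd3_reflected[OF gA] J_def K_def by (simp add: vec_eq_iff forall_3)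
  also have "\<dots> = - (det M *\<^sub>R (M *v vector [J 3 2 - J 2 3, J 1 3 - J 3 1, J 2 1 - J 1 2]))"
    unfolding K_def axial_vector_conjugate_symmetric_involution[OF sym inv] ..
  also have "vector [J 3 2 - J 2 3, J 1 3 - J 3 1, J 2 1 - J 1 2] = curl A (M *v x)"
    unfolding curl_def J_def ..
  finally show ?thesis by simp
qed

section \<open>The kinetic energy under \<open>T\<close>\<close>

definition particlewise :: "real^3^3 \<Rightarrow> real^3^'n::finite \<Rightarrow> real^3^'n" where
  "particlewise M x = (\<chi> j. M *v (x $ j))"

definition particle_axis :: "'n::finite \<Rightarrow> 3 \<Rightarrow> real^3^'n" where
  "particle_axis j k = (\<chi> i. if i = j then axis k 1 else 0)"

lemma particlewise_nth [simp]: "particlewise M x $ j = M *v (x $ j)"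
  by (simp add: particlewise_def)

lemma linear_particlewise: "linear (particlewise M)"
  by (rule linearI) (simp_all add: vec_eq_iff matrix_vector_right_distrib matrix_vector_mult_scaleR)

lemma particlewise_particle_axis:
  "particlewise M (particle_axis j k) = (\<Sum>l\<in>UNIV. M$l$k *\<^sub>R particle_axis j l)"
  by (simp add: vec_eq_iff particlewise_def particle_axis_def matrix_vector_mult_def axis_def
      sum.delta' if_distrib[of "\<lambda>z. M $ _ $ _ * z"] cong: if_cong)

lemma pdj_eq_dirderiv: "pdj j k \<psi> x s = dirderiv (particle_axis j k) (\<lambda>y. \<psi> y s) x"
  by (simp add: pdj_def particle_axis_def)

lemma Top_eq: "Top M Us \<psi> x s = (\<Sum>s'\<in>UNIV. (\<Prod>j\<in>UNIV. Us (s j) (s' j)) * cnj (\<psi> (particlewise M x) s'))"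
  by (simp add: Top_def particlewise_def)

lemma Top_sum: "Top M Us (\<lambda>y s. \<Sum>k\<in>K. f k y s) x s = (\<Sum>k\<in>K. Top M Us (f k) x s)"
  unfolding Top_eq by (simp add: sum_distrib_left sum.swap[of _ _ K])

lemma Top_scaled: "Top M Us (\<lambda>y s. complex_of_real c * f y s) x s = complex_of_real c * Top M Us f x s"
  unfolding Top_eq by (simp add: sum_distrib_left mult_ac)

lemma Top_diff: "Top M Us (\<lambda>y s. f y s - g y s) x s = Top M Us f x s - Top M Us g x s"
  unfolding Top_eq by (simp add: sum_subtractf right_diff_distrib)

lemma dirderiv_Top:
  assumes "\<And>s. line_differentiable (\<lambda>y. \<psi> y s)"
  shows "dirderiv v (\<lambda>y. Top M Us \<psi> y s) x = (\<Sum>s'\<in>UNIV. (\<Prod>j\<in>UNIV. Us (s j) (s' j)) *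
            cnj (dirderiv (particlewise M v) (\<lambda>y. \<psi> y s') (particlewise M x)))"
proof -
  have bl: "bounded_linear (\<lambda>z. c * cnj z :: complex)" for c
    using bounded_linear_compose[OF bounded_linear_mult_right bounded_linear_cnj] by (simp add: o_def)
  have ld: "line_differentiable (\<lambda>y. \<psi> (particlewise M y) s')" for s'
    using assms linear_particlewise by (rule line_differentiable_compose_linear)
  have "dirderiv v (\<lambda>y. \<psi> (particlewise M y) s') x
      = dirderiv (particlewise M v) (\<lambda>y. \<psi> y s') (particlewise M x)" for s'
    by (rule dirderiv_compose_linear[OF linear_particlewise, where f = "\<lambda>z. \<psi> z s'"])
  then show ?thesis
    unfolding Top_eq
    by (simp add: dirderiv_sum line_differentiable_compose_bounded_linear[OF ld bl]
        dirderiv_compose_bounded_linear[OF ld bl])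
qed

lemma kinmom_reflected_Top:
  fixes \<psi> :: "'n::finite wf"
  assumes sym: "transpose M = M" and inv: "M ** M = mat 1"
    and g\<psi>: "\<And>s. gateaux_differentiable (\<lambda>y. \<psi> y s)"
  shows "kinmom (\<lambda>z. - (M *v A (M *v z))) q j k (Top M Us \<psi>)
       = Top M Us (\<lambda>y s. \<Sum>l\<in>UNIV. of_real (- M$k$l) * kinmom A q j l \<psi> y s)"
proof (intro ext)
  fix x :: "real^3^'n" and s :: "'n \<Rightarrow> bool"
  define U where "U = (\<lambda>s'. \<Prod>i\<in>UNIV. Us (s i) (s' i))"
  define y where "y = particlewise M x"
  define D where "D = (\<lambda>l s'. dirderiv (particle_axis j l) (\<lambda>z. \<psi> z s') y)"
  define a where "a = (\<lambda>l. A (y $ j) $ l)"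
  have "dirderiv (particlewise M (particle_axis j k)) (\<lambda>z. \<psi> z s') y = (\<Sum>l\<in>UNIV. of_real (M$k$l) * D l s')" for s'
  proof -
    note lin = gateaux_differentiable_linear[OF g\<psi>, of s' y]
    show ?thesis
      unfolding particlewise_particle_axis D_def symmetric_matrix_entry[OF sym, of _ k]
      by (simp add: linear_sum[OF lin] linear_scale[OF lin]) (simp add: scaleR_conv_of_real)
  qed
  then have pd: "pdj j k (Top M Us \<psi>) x s = (\<Sum>s'\<in>UNIV. U s' * cnj (\<Sum>l\<in>UNIV. of_real (M$k$l) * D l s'))"
    unfolding pdj_eq_dirderiv dirderiv_Top[OF g\<psi>[THEN gateaux_differentiable_line_differentiable]]
    by (simp add: U_def y_def particle_axis_def)
  have "kinmom (\<lambda>z. - (M *v A (M *v z))) q j k (Top M Us \<psi>) x s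
      = - \<i> * (\<Sum>s'\<in>UNIV. U s' * cnj (\<Sum>l\<in>UNIV. of_real (M$k$l) * D l s'))
        + of_real q * (\<Sum>l\<in>UNIV. of_real (M$k$l) * of_real (a l)) * (\<Sum>s'\<in>UNIV. U s' * cnj (\<psi> y s'))"
    by (simp add: kinmom_def pd Top_eq U_def y_def a_def matrix_vector_mult_def)
  also have "\<dots> = (\<Sum>s'\<in>UNIV. U s' * cnj (\<Sum>l\<in>UNIV. of_real (- M$k$l) *
                    (- \<i> * D l s' - of_real (q * a l) * \<psi> y s')))"
    by (simp add: sum_distrib_left sum_distrib_right sum.distrib algebra_simps) (rule sum.swap)
  also have "\<dots> = Top M Us (\<lambda>y s. \<Sum>l\<in>UNIV. of_real (- M$k$l) * kinmom A q j l \<psi> y s) x s"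
    by (simp add: Top_eq U_def y_def kinmom_def pdj_eq_dirderiv D_def a_def)
  finally show "kinmom (\<lambda>z. - (M *v A (M *v z))) q j k (Top M Us \<psi>) x s
      = Top M Us (\<lambda>y s. \<Sum>l\<in>UNIV. of_real (- M$k$l) * kinmom A q j l \<psi> y s) x s" .
qed

lemma kinmom_linear_combination:
  fixes f :: "'i::finite \<Rightarrow> 'n::finite wf"
  assumes ld: "\<And>l s. line_differentiable (\<lambda>y. f l y s)"
  shows "kinmom A q j k (\<lambda>y s. \<Sum>l\<in>UNIV. c l * f l y s) = (\<lambda>y s. \<Sum>l\<in>UNIV. c l * kinmom A q j k (f l) y s)"
proof (intro ext)
  fix y s
  have "pdj j k (\<lambda>y s. \<Sum>l\<in>UNIV. c l * f l y s) y s = (\<Sum>l\<in>UNIV. c l * pdj j k (f l) y s)"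
    unfolding pdj_eq_dirderiv
    by (simp add: dirderiv_sum line_differentiable_compose_bounded_linear[OF ld bounded_linear_mult_right]
        dirderiv_compose_bounded_linear[OF ld bounded_linear_mult_right])
  then show "kinmom A q j k (\<lambda>y s. \<Sum>l\<in>UNIV. c l * f l y s) y s = (\<Sum>l\<in>UNIV. c l * kinmom A q j k (f l) y s)"
    by (simp add: kinmom_def sum_distrib_left sum_subtractf algebra_simps)
qed

lemma gateaux_differentiable_kinmom:
  fixes \<psi> :: "'n::finite wf"
  assumes gA: "gateaux_differentiable A" and s\<psi>: "smooth (\<lambda>y. \<psi> y s)"
  shows "gateaux_differentiable (\<lambda>y. kinmom A q j k \<psi> y s)"
proof -
  have "gateaux_differentiable (\<lambda>y. - \<i> * dirderiv (particle_axis j k) (\<lambda>z. \<psi> z s) y)"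
    using smooth_gateaux_differentiable[OF smooth_dirderiv[OF s\<psi>]] bounded_linear_mult_right
    by (rule gateaux_differentiable_compose_bounded_linear)
  moreover have "gateaux_differentiable (\<lambda>y. complex_of_real (q * A (y $ j) $ k) * \<psi> y s)"
  proof (rule gateaux_differentiable_mult)
    have "gateaux_differentiable (\<lambda>y::real^3^'n. A (y $ j))"
      using gA bounded_linear.linear[OF bounded_linear_vec_nth]
      by (rule gateaux_differentiable_compose_linear)
    moreover have "bounded_linear (\<lambda>w::real^3. complex_of_real (q * w $ k))"
      using bounded_linear_compose[OF bounded_linear_of_real
          bounded_linear_compose[OF bounded_linear_mult_right bounded_linear_vec_nth]]
      by (simp add: o_def)
    ultimately show "gateaux_differentiable (\<lambda>y. complex_of_real (q * A (y $ j) $ k))"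
      by (rule gateaux_differentiable_compose_bounded_linear)
    show "gateaux_differentiable (\<lambda>y. \<psi> y s)"
      using s\<psi> by (rule smooth_gateaux_differentiable)
  qed
  ultimately show ?thesis
    unfolding kinmom_def pdj_eq_dirderiv by (rule gateaux_differentiable_diff)
qed

lemma sum_orthonormal_contraction:
  fixes c :: "'i::finite \<Rightarrow> 'i \<Rightarrow> 'a::comm_ring_1"
  assumes orth: "\<And>n l. (\<Sum>k\<in>UNIV. c k n * c k l) = (if n = l then 1 else 0)"
  shows "(\<Sum>k\<in>UNIV. \<Sum>n\<in>UNIV. c k n * (\<Sum>l\<in>UNIV. c k l * X n l)) = (\<Sum>n\<in>UNIV. X n n)"
proof -
  have "(\<Sum>k\<in>UNIV. \<Sum>n\<in>UNIV. c k n * (\<Sum>l\<in>UNIV. c k l * X n l))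
      = (\<Sum>k\<in>UNIV. \<Sum>n\<in>UNIV. \<Sum>l\<in>UNIV. c k n * c k l * X n l)"
    by (simp add: sum_distrib_left mult.assoc)
  also have "\<dots> = (\<Sum>n\<in>UNIV. \<Sum>k\<in>UNIV. \<Sum>l\<in>UNIV. c k n * c k l * X n l)"
    by (rule sum.swap)
  also have "\<dots> = (\<Sum>n\<in>UNIV. \<Sum>l\<in>UNIV. \<Sum>k\<in>UNIV. c k n * c k l * X n l)"
    by (rule sum.cong[OF refl], rule sum.swap)
  also have "\<dots> = (\<Sum>n\<in>UNIV. \<Sum>l\<in>UNIV. (if n = l then 1 else 0) * X n l)"
    by (simp only: orth sum_distrib_right[symmetric])
  also have "\<dots> = (\<Sum>n\<in>UNIV. X n n)"
    by (simp add: if_distrib[of "\<lambda>z. z * _"] cong: if_cong)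
  finally show ?thesis .
qed

lemma Top_kinetic_reflected:
  fixes \<psi> :: "'n::finite wf"
  assumes sym: "transpose M = M" and inv: "M ** M = mat 1"
    and gA: "gateaux_differentiable A" and s\<psi>: "\<And>s. smooth (\<lambda>y. \<psi> y s)"
  shows "Top M Us (\<lambda>x s. \<Sum>k\<in>UNIV. kinmom A q j k (kinmom A q j k \<psi>) x s)
       = (\<lambda>x s. \<Sum>k\<in>UNIV. kinmom (\<lambda>z. - (M *v A (M *v z))) q j k
                             (kinmom (\<lambda>z. - (M *v A (M *v z))) q j k (Top M Us \<psi>)) x s)"
proof (intro ext)
  fix x s
  define A' where "A' = (\<lambda>z. - (M *v A (M *v z)))"
  define c where "c = (\<lambda>k l. complex_of_real (- M$k$l))"
  define P where "P = kinmom A q j"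
  define \<phi> where "\<phi> = (\<lambda>k y s. \<Sum>l\<in>UNIV. c k l * P l \<psi> y s)"
  have gP: "gateaux_differentiable (\<lambda>y. P l \<psi> y s)" for l s
    unfolding P_def using gA s\<psi> by (rule gateaux_differentiable_kinmom)
  have g\<phi>: "gateaux_differentiable (\<lambda>y. \<phi> k y s)" for k s
    unfolding \<phi>_def
    by (intro gateaux_differentiable_sum gateaux_differentiable_compose_bounded_linear[OF gP]
        bounded_linear_mult_right)
  have once: "kinmom A' q j k (Top M Us \<psi>) = Top M Us (\<phi> k)" for k
    unfolding A'_def \<phi>_def c_def P_def
    using sym inv smooth_gateaux_differentiable[OF s\<psi>] by (rule kinmom_reflected_Top)
  have twice: "kinmom A' q j k (Top M Us (\<phi> k)) = Top M Us (\<lambda>y s. \<Sum>n\<in>UNIV. c k n * P n (\<phi> k) y s)" for k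
    unfolding A'_def c_def P_def
    using sym inv g\<phi> by (rule kinmom_reflected_Top)
  have linear_P: "P n (\<phi> k) = (\<lambda>y s. \<Sum>l\<in>UNIV. c k l * P n (P l \<psi>) y s)" for n k
    unfolding P_def \<phi>_def
    by (rule kinmom_linear_combination[OF gP[THEN gateaux_differentiable_line_differentiable, unfolded P_def]])
  have orth: "(\<Sum>k\<in>UNIV. c k n * c k l) = (if n = l then 1 else 0)" for n l
    using arg_cong[OF orthonormal_columns_symmetric_involution[OF sym inv, of n l], of complex_of_real]
    by (simp add: c_def)
  have "(\<Sum>k\<in>UNIV. kinmom A' q j k (kinmom A' q j k (Top M Us \<psi>)) x s)
      = (\<Sum>k\<in>UNIV. Top M Us (\<lambda>y s. \<Sum>n\<in>UNIV. c k n * (\<Sum>l\<in>UNIV. c k l * P n (P l \<psi>) y s)) x s)"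
    by (simp add: once twice linear_P)
  also have "\<dots> = Top M Us (\<lambda>y s. \<Sum>n\<in>UNIV. P n (P n \<psi>) y s) x s"
    by (simp add: Top_sum[symmetric] sum_orthonormal_contraction[OF orth])
  finally show "Top M Us (\<lambda>x s. \<Sum>k\<in>UNIV. kinmom A q j k (kinmom A q j k \<psi>) x s) x s
      = (\<Sum>k\<in>UNIV. kinmom A' q j k (kinmom A' q j k (Top M Us \<psi>)) x s)"
    unfolding A'_def P_def by simp
qed

section \<open>The spin part of \<open>T\<close>\<close>

definition tensor_power :: "(bool \<Rightarrow> bool \<Rightarrow> complex) \<Rightarrow> (('n::finite \<Rightarrow> bool) \<Rightarrow> complex) \<Rightarrow> ('n \<Rightarrow> bool) \<Rightarrow> complex" where
  "tensor_power U c s = (\<Sum>s'\<in>UNIV. (\<Prod>j\<in>UNIV. U (s j) (s' j)) * c s')"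

definition on_site :: "'n::finite \<Rightarrow> (bool \<Rightarrow> bool \<Rightarrow> complex) \<Rightarrow> (('n \<Rightarrow> bool) \<Rightarrow> complex) \<Rightarrow> ('n \<Rightarrow> bool) \<Rightarrow> complex" where
  "on_site j X c s = (\<Sum>b\<in>UNIV. X (s j) b * c (s(j := b)))"

definition pauli_dot :: "real^3 \<Rightarrow> bool \<Rightarrow> bool \<Rightarrow> complex" where
  "pauli_dot v a b = (\<Sum>k\<in>UNIV. complex_of_real (v $ k) * pauli k a b)"

lemma Top_eq_tensor_power: "Top M Us \<psi> x = tensor_power Us (\<lambda>s'. cnj (\<psi> (particlewise M x) s'))"
  by (simp add: fun_eq_iff Top_eq tensor_power_def)

lemma spinB_eq_on_site: "spinB B j \<psi> x s = on_site j (pauli_dot (B (x $ j))) (\<psi> x) s"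
  unfolding spinB_def on_site_def pauli_dot_def sum_distrib_right by (rule sum.swap)

lemma cnj_on_site: "cnj (on_site j X c s) = on_site j (\<lambda>a b. cnj (X a b)) (\<lambda>t. cnj (c t)) s"
  by (simp add: on_site_def)

lemma sum_fun_upd_reindex:
  fixes F :: "('n::finite \<Rightarrow> 'b::finite) \<Rightarrow> 'b \<Rightarrow> 'a::comm_monoid_add"
  shows "(\<Sum>s\<in>UNIV. \<Sum>b\<in>UNIV. F s b) = (\<Sum>t\<in>UNIV. \<Sum>a\<in>UNIV. F (t(j := a)) (t j))"
proof -
  have "(\<Sum>s\<in>UNIV. \<Sum>b\<in>UNIV. F s b) = (\<Sum>p\<in>UNIV \<times> UNIV. F (fst p) (snd p))"
    by (simp add: sum.cartesian_product split_beta)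
  also have "\<dots> = (\<Sum>p\<in>UNIV \<times> UNIV. F ((fst p)(j := snd p)) (fst p j))"
    by (rule sum.reindex_bij_witness[where i = "\<lambda>p. ((fst p)(j := snd p), fst p j)"
          and j = "\<lambda>p. ((fst p)(j := snd p), fst p j)"]) auto
  also have "\<dots> = (\<Sum>t\<in>UNIV. \<Sum>a\<in>UNIV. F (t(j := a)) (t j))"
    by (simp add: sum.cartesian_product split_beta)
  finally show ?thesis .
qed

lemma prod_fun_upd:
  fixes F :: "'n::finite \<Rightarrow> 'b \<Rightarrow> 'a::comm_monoid_mult"
  shows "(\<Prod>i\<in>UNIV. F i ((t(j := a)) i)) = F j a * (\<Prod>i\<in>UNIV - {j}. F i (t i))"
proof -
  have "(\<Prod>i\<in>UNIV. F i ((t(j := a)) i)) = F j a * (\<Prod>i\<in>UNIV - {j}. F i ((t(j := a)) i))"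
    by (subst prod.remove[of UNIV j]) auto
  also have "(\<Prod>i\<in>UNIV - {j}. F i ((t(j := a)) i)) = (\<Prod>i\<in>UNIV - {j}. F i (t i))"
    by (rule prod.cong) auto
  finally show ?thesis .
qed

text \<open>Split off the \<open>j\<close>-th factor of the product and reindex the sum over spin configurations.\<close>
lemma tensor_power_on_site:
  assumes UXY: "\<And>a c. (\<Sum>b\<in>UNIV. U a b * X b c) = (\<Sum>b\<in>UNIV. Y a b * U b c)"
  shows "tensor_power U (on_site j X c) s = on_site j Y (tensor_power U c) s"
proof -
  define R where "R = (\<lambda>t. \<Prod>i\<in>UNIV - {j}. U (s i) (t i))"
  have right: "(\<Prod>i\<in>UNIV. U (s i) ((t(j := a)) i)) = U (s j) a * R t" for t a
    unfolding R_def by (rule prod_fun_upd)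
  have left: "(\<Prod>i\<in>UNIV. U ((s(j := b)) i) (t i)) = U b (t j) * R t" for t b
    unfolding R_def by (rule prod_fun_upd[where F = "\<lambda>i x. U x (t i)"])
  have "tensor_power U (on_site j X c) s
      = (\<Sum>s'\<in>UNIV. \<Sum>b\<in>UNIV. (\<Prod>i\<in>UNIV. U (s i) (s' i)) * X (s' j) b * c (s'(j := b)))"
    by (simp add: tensor_power_def on_site_def sum_distrib_left mult.assoc)
  also have "\<dots> = (\<Sum>t\<in>UNIV. \<Sum>a\<in>UNIV. (\<Prod>i\<in>UNIV. U (s i) ((t(j := a)) i)) * X a (t j) * c t)"
    by (subst sum_fun_upd_reindex[of _ j]) simp
  also have "\<dots> = (\<Sum>t\<in>UNIV. R t * c t * (\<Sum>a\<in>UNIV. U (s j) a * X a (t j)))"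
    unfolding right by (simp add: sum_distrib_left mult_ac)
  also have "\<dots> = (\<Sum>t\<in>UNIV. R t * c t * (\<Sum>b\<in>UNIV. Y (s j) b * U b (t j)))"
    by (simp only: UXY)
  also have "\<dots> = (\<Sum>t\<in>UNIV. \<Sum>b\<in>UNIV. Y (s j) b * ((\<Prod>i\<in>UNIV. U ((s(j := b)) i) (t i)) * c t))"
    unfolding left by (simp add: sum_distrib_left mult_ac)
  also have "\<dots> = on_site j Y (tensor_power U c) s"
    unfolding on_site_def tensor_power_def sum_distrib_left by (rule sum.swap)
  finally show ?thesis .
qed

lemma Top_spinB:
  assumes "\<And>v a c. (\<Sum>b\<in>UNIV. Us a b * cnj (pauli_dot (B (M *v v)) b c)) = (\<Sum>b\<in>UNIV. pauli_dot (B v) a b * Us b c)"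
  shows "Top M Us (spinB B j \<psi>) = spinB B j (Top M Us \<psi>)"
proof (intro ext)
  fix x s
  show "Top M Us (spinB B j \<psi>) x s = spinB B j (Top M Us \<psi>) x s"
    unfolding Top_eq_tensor_power spinB_eq_on_site cnj_on_site particlewise_nth
    by (rule tensor_power_on_site) (rule assms)
qed

lemma rank_one_factorization:
  fixes P :: "3 \<Rightarrow> 3 \<Rightarrow> real"
  assumes pos: "P m m > 0" and minor: "\<And>k l. P k l * P m m = P k m * P l m"
    and diag: "P m m = P 1 m * P 1 m + P 2 m * P 2 m + P 3 m * P 3 m"
  shows "\<exists>n. n 1 * n 1 + n 2 * n 2 + n 3 * n 3 = 1 \<and> (\<forall>k l. P k l = n k * n l)"
proof -
  define n where "n = (\<lambda>k. P k m / sqrt (P m m))"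
  have sq: "sqrt (P m m) * sqrt (P m m) = P m m" using pos by simp
  have nn: "n k * n l = P k l" for k l
  proof -
    have "n k * n l = P k m * P l m / (sqrt (P m m) * sqrt (P m m))"
      by (simp add: n_def)
    also have "\<dots> = P k l"
      using minor[of k l] pos by (simp add: sq field_simps)
    finally show ?thesis .
  qed
  have "n 1 * n 1 + n 2 * n 2 + n 3 * n 3 = (P 1 m * P 1 m + P 2 m * P 2 m + P 3 m * P 3 m) / P m m"
    using pos by (simp add: n_def sq add_divide_distrib)
  also have "\<dots> = 1" using diag pos by simp
  finally show ?thesis
    using nn by (intro exI[of _ n]) simp
qed

text \<open>\<open>(R + I)/2\<close> is a projection of rank one.\<close>
lemma half_turn_axis:
  fixes R :: "real^3^3"
  assumes sym: "transpose R = R" and inv: "R ** R = mat 1" and det: "det R = 1"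
    and tr: "R$1$1 + R$2$2 + R$3$3 = -1"
  shows "\<exists>n. n 1 * n 1 + n 2 * n 2 + n 3 * n 3 = 1 \<and> (\<forall>k l. R$k$l = 2 * n k * n l - (if k = l then 1 else 0))"
proof -
  note e = symmetric_involution_entries[OF sym inv]
  note c = cofactors_symmetric_involution[OF sym inv, unfolded det mult_1]
  define P where "P = (\<lambda>k l. (R$k$l + (if k = l then 1 else 0)) / 2)"
  have minor: "\<forall>m k l. P k l * P m m = P k m * P l m"
    unfolding forall_3 P_def using tr e c by (simp add: field_simps)
  have diag: "\<forall>m. P m m = P 1 m * P 1 m + P 2 m * P 2 m + P 3 m * P 3 m"
    unfolding forall_3 P_def using tr e c by (simp add: field_simps)
  have "P m m \<ge> 0" for m
    using diag[rule_format, of m] by (metis add_nonneg_nonneg zero_le_square)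
  moreover have "P 1 1 + P 2 2 + P 3 3 = 1"
    using tr unfolding P_def by (simp add: field_simps)
  ultimately obtain m where "P m m > 0"
    by (metis add.right_neutral add_0 less_eq_real_def zero_neq_one)
  then obtain n where n: "n 1 * n 1 + n 2 * n 2 + n 3 * n 3 = 1" and "\<forall>k l. P k l = n k * n l"
    using rank_one_factorization[of P m] minor diag by blast
  then have "\<forall>k l. R$k$l = 2 * n k * n l - (if k = l then 1 else 0)"
    unfolding P_def by (auto simp: field_simps)
  with n show ?thesis by blast
qed

text \<open>The identities \<open>(1 + tr R) (R - I) = 0\<close> separate the two cases.\<close>
lemma symmetric_rotation_cases:
  fixes R :: "real^3^3"
  assumes sym: "transpose R = R" and inv: "R ** R = mat 1" and det: "det R = 1"
  shows "R = mat 1 \<or>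
    (\<exists>n. n 1 * n 1 + n 2 * n 2 + n 3 * n 3 = 1 \<and> (\<forall>k l. R$k$l = 2 * n k * n l - (if k = l then 1 else 0)))"
proof (cases "R$1$1 + R$2$2 + R$3$3 = -1")
  case True
  then show ?thesis using half_turn_axis[OF assms] by blast
next
  case False
  note e = symmetric_involution_entries[OF sym inv]
  note c = cofactors_symmetric_involution[OF sym inv, unfolded det mult_1]
  define t where "t = R$1$1 + R$2$2 + R$3$3"
  have "(1 + t) * (R$1$1 - 1) = 0" "(1 + t) * (R$2$2 - 1) = 0" "(1 + t) * (R$3$3 - 1) = 0"
    "(1 + t) * R$1$2 = 0" "(1 + t) * R$1$3 = 0" "(1 + t) * R$2$3 = 0"
    unfolding t_def using e(4-9) c by algebra+
  moreover have "1 + t \<noteq> 0" using False t_def by simp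
  ultimately have "R$1$1 = 1" "R$2$2 = 1" "R$3$3 = 1" "R$1$2 = 0" "R$1$3 = 0" "R$2$3 = 0"
    by simp_all
  then have "R = mat 1"
    by (simp add: vec_eq_iff forall_3 mat_def e(1-3))
  then show ?thesis ..
qed

text \<open>\<open>spin_flip\<close> is \<open>i\<sigma>\<^sub>y\<close>, and \<open>spin_flip_axis n\<close> is the matrix product \<open>(\<sigma> \<cdot> n) i\<sigma>\<^sub>y\<close>.\<close>
definition spin_flip :: "bool \<Rightarrow> bool \<Rightarrow> complex" where
  "spin_flip a b = (if a = b then 0 else if a then 1 else -1)"

definition spin_flip_axis :: "(3 \<Rightarrow> real) \<Rightarrow> bool \<Rightarrow> bool \<Rightarrow> complex" where
  "spin_flip_axis n a b =
    (if a then (if b then - of_real (n 1) + \<i> * of_real (n 2) else of_real (n 3))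
     else (if b then of_real (n 3) else of_real (n 1) + \<i> * of_real (n 2)))"

lemma sum_UNIV_bool: "(\<Sum>b\<in>(UNIV::bool set). f b) = f True + f False"
  by (simp add: UNIV_bool add.commute)

lemma unitary2_spin_flip: "unitary2 spin_flip"
  unfolding unitary2_def spin_flip_def by (simp add: sum_UNIV_bool)

lemma unitary2_spin_flip_axis:
  assumes "n 1 * n 1 + n 2 * n 2 + n 3 * n 3 = 1"
  shows "unitary2 (spin_flip_axis n)"
  unfolding unitary2_def
proof (intro allI)
  fix a b :: bool
  show "(\<Sum>c\<in>UNIV. cnj (spin_flip_axis n c a) * spin_flip_axis n c b) = (if a = b then 1 else 0)"
    using assms by (cases a; cases b) (simp_all add: spin_flip_axis_def sum_UNIV_bool complex_eq_iff algebra_simps)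
qed

lemma spin_flip_conj_pauli:
  "(\<Sum>k\<in>UNIV. of_real (mat 1 $ k $ l) * (\<Sum>b\<in>UNIV. spin_flip a b * cnj (pauli k b c)))
     = - (\<Sum>b\<in>UNIV. pauli l a b * spin_flip b c)"
proof -
  have "\<forall>l. (\<Sum>k\<in>UNIV. of_real (mat 1 $ k $ l) * (\<Sum>b\<in>UNIV. spin_flip a b * cnj (pauli k b c)))
     = - (\<Sum>b\<in>UNIV. pauli l a b * spin_flip b c)"
    unfolding forall_3 by (cases a; cases c) (simp_all add: sum_UNIV_bool sum_3 mat_def spin_flip_def pauli_def)
  then show ?thesis by blast
qed

lemma spin_flip_axis_conj_pauli:
  assumes "n 1 * n 1 + n 2 * n 2 + n 3 * n 3 = 1"
  shows "(\<Sum>k\<in>UNIV. of_real (2 * n k * n l - (if k = l then 1 else 0)) *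
            (\<Sum>b\<in>UNIV. spin_flip_axis n a b * cnj (pauli k b c)))
     = - (\<Sum>b\<in>UNIV. pauli l a b * spin_flip_axis n b c)"
proof -
  have "\<forall>l. (\<Sum>k\<in>UNIV. of_real (2 * n k * n l - (if k = l then 1 else 0)) *
            (\<Sum>b\<in>UNIV. spin_flip_axis n a b * cnj (pauli k b c)))
     = - (\<Sum>b\<in>UNIV. pauli l a b * spin_flip_axis n b c)"
    unfolding forall_3 using assms
    by (cases a; cases c; simp add: sum_UNIV_bool sum_3 spin_flip_axis_def pauli_def complex_eq_iff
        algebra_simps; intro conjI; algebra)
  then show ?thesis by blast
qed

lemma intertwiner_pauli_dot:
  assumes "\<And>l a c. (\<Sum>k\<in>UNIV. of_real (R$k$l) * (\<Sum>b\<in>UNIV. U a b * cnj (pauli k b c)))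
                    = - (\<Sum>b\<in>UNIV. pauli l a b * U b c)"
  shows "(\<Sum>b\<in>UNIV. U a b * cnj (pauli_dot (R *v v) b c)) = - (\<Sum>b\<in>UNIV. pauli_dot v a b * U b c)"
proof -
  define X where "X = (\<lambda>l k b. of_real (v $ l) * (of_real (R$k$l) * (U a b * cnj (pauli k b c))))"
  have "(\<Sum>b\<in>UNIV. U a b * cnj (pauli_dot (R *v v) b c)) = (\<Sum>b\<in>UNIV. \<Sum>k\<in>UNIV. \<Sum>l\<in>UNIV. X l k b)"
    by (simp add: X_def pauli_dot_def matrix_vector_mult_def sum_distrib_left sum_distrib_right mult_ac)
  also have "\<dots> = (\<Sum>k\<in>UNIV. \<Sum>b\<in>UNIV. \<Sum>l\<in>UNIV. X l k b)"
    by (rule sum.swap)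
  also have "\<dots> = (\<Sum>k\<in>UNIV. \<Sum>l\<in>UNIV. \<Sum>b\<in>UNIV. X l k b)"
    by (rule sum.cong[OF refl], rule sum.swap)
  also have "\<dots> = (\<Sum>l\<in>UNIV. \<Sum>k\<in>UNIV. \<Sum>b\<in>UNIV. X l k b)"
    by (rule sum.swap)
  also have "\<dots> = (\<Sum>l\<in>UNIV. of_real (v $ l) * - (\<Sum>b\<in>UNIV. pauli l a b * U b c))"
    by (simp add: X_def sum_distrib_left[symmetric] assms)
  also have "\<dots> = - (\<Sum>l\<in>UNIV. \<Sum>b\<in>UNIV. of_real (v $ l) * pauli l a b * U b c)"
    by (simp add: sum_distrib_left sum_negf mult.assoc)
  also have "\<dots> = - (\<Sum>b\<in>UNIV. pauli_dot v a b * U b c)"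
    unfolding pauli_dot_def sum_distrib_right by (subst sum.swap) (rule refl)
  finally show ?thesis .
qed

lemma exists_spin_intertwiner:
  fixes R :: "real^3^3"
  assumes "transpose R = R" "R ** R = mat 1" "det R = 1"
  obtains U where "unitary2 U"
    and "\<And>v a c. (\<Sum>b\<in>UNIV. U a b * cnj (pauli_dot (R *v v) b c)) = - (\<Sum>b\<in>UNIV. pauli_dot v a b * U b c)"
  using symmetric_rotation_cases[OF assms]
proof
  assume "R = mat 1"
  then show ?thesis
    by (intro that[OF unitary2_spin_flip] intertwiner_pauli_dot) (simp add: spin_flip_conj_pauli)
next
  assume "\<exists>n. n 1 * n 1 + n 2 * n 2 + n 3 * n 3 = 1 \<and>
      (\<forall>k l. R$k$l = 2 * n k * n l - (if k = l then 1 else 0))"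
  then obtain n where n: "n 1 * n 1 + n 2 * n 2 + n 3 * n 3 = 1"
    and R: "\<forall>k l. R$k$l = 2 * n k * n l - (if k = l then 1 else 0)" by blast
  show ?thesis
    by (intro that[OF unitary2_spin_flip_axis[OF n]] intertwiner_pauli_dot)
      (simp only: R spin_flip_axis_conj_pauli[OF n])
qed

lemma scaled_orthogonal_involution:
  fixes M :: "real^3^3"
  assumes orth: "orthogonal_matrix M" and inv: "M ** M = mat 1"
  shows "transpose (det M *\<^sub>R M) = det M *\<^sub>R M" and "(det M *\<^sub>R M) ** (det M *\<^sub>R M) = mat 1"
    and "det (det M *\<^sub>R M) = 1"
proof -
  have sym: "transpose M = M"
    using orth inv by (rule symmetric_if_orthogonal_involution)
  have det_scaled: "det (c *\<^sub>R M) = c * c * c * det M" for c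
    by (simp add: det_3 algebra_simps)
  show "transpose (det M *\<^sub>R M) = det M *\<^sub>R M"
    by (simp add: transpose_scalar sym)
  from det_orthogonal_matrix[OF orth] show "(det M *\<^sub>R M) ** (det M *\<^sub>R M) = mat 1" "det (det M *\<^sub>R M) = 1"
    by (auto simp: matrix_scalar_ac scalar_matrix_assoc[symmetric] inv det_scaled)
qed

lemma pauli_dot_uminus: "pauli_dot (- v) a b = - pauli_dot v a b"
  by (simp add: pauli_dot_def sum_negf)

lemma intertwiner_reflected_field:
  fixes M :: "real^3^3"
  assumes U: "\<And>v a c. (\<Sum>b\<in>UNIV. U a b * cnj (pauli_dot ((det M *\<^sub>R M) *v v) b c))
                        = - (\<Sum>b\<in>UNIV. pauli_dot v a b * U b c)"
    and inv: "M ** M = mat 1" and B: "\<And>x. det M *\<^sub>R (M *v B (M *v x)) = - B x"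
  shows "(\<Sum>b\<in>UNIV. U a b * cnj (pauli_dot (B (M *v v)) b c)) = (\<Sum>b\<in>UNIV. pauli_dot (B v) a b * U b c)"
proof -
  have "B (M *v v) = - ((det M *\<^sub>R M) *v B v)"
    using B[of "M *v v"] inv by (simp add: matrix_vector_mul_assoc scaleR_matrix_vector_assoc)
  then show ?thesis
    using U[of a "B v" c] by (simp add: pauli_dot_uminus sum_negf)
qed

lemma Top_pauliH:
  "Top M Us (pauliH m q A \<psi>) x s =
    (\<Sum>j\<in>UNIV. complex_of_real (1 / (2 * m j)) *
      (Top M Us (\<lambda>x s. \<Sum>k\<in>UNIV. kinmom A (q j) j k (kinmom A (q j) j k \<psi>) x s) x s
       - complex_of_real (q j) * Top M Us (spinB (curl A) j \<psi>) x s))"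
  unfolding pauliH_def[abs_def] by (simp only: Top_sum Top_scaled Top_diff)

lemma exists_spin_intertwiner_reflected:
  fixes M :: "real^3^3"
  assumes "orthogonal_matrix M" and "M ** M = mat 1" and "\<And>x. det M *\<^sub>R (M *v B (M *v x)) = - B x"
  obtains Us where "unitary2 Us" and "\<And>j \<psi>. Top M Us (spinB B j \<psi>) = spinB B j (Top M Us \<psi>)"
proof -
  obtain Us where "unitary2 Us"
    and "\<And>v a c. (\<Sum>b\<in>UNIV. Us a b * cnj (pauli_dot ((det M *\<^sub>R M) *v v) b c))
                       = - (\<Sum>b\<in>UNIV. pauli_dot v a b * Us b c)"
    using exists_spin_intertwiner[OF scaled_orthogonal_involution[OF assms(1,2)]] by blast
  note U = this(2)
  show thesis
  proof (rule that)
    show "unitary2 Us" by fact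
    show "Top M Us (spinB B j \<psi>) = spinB B j (Top M Us \<psi>)" for j \<psi>
      by (intro Top_spinB intertwiner_reflected_field[where M = M and B = B and U = Us, OF U assms(2,3)])
  qed
qed

lemma smooth_reflected:
  fixes A :: "real^3 \<Rightarrow> real^3" and M :: "real^3^3"
  assumes "smooth A"
  shows "smooth (\<lambda>z. - (M *v A (M *v z)))"
  using smooth_compose_linear[OF assms bounded_linear.linear[OF matrix_vector_mul_bounded_linear]]
    bounded_linear_minus[OF matrix_vector_mul_bounded_linear]
  by (rule smooth_compose_bounded_linear)

lemma Top_pauliH_reflected:
  fixes \<psi> :: "'n::finite wf"
  assumes sym: "transpose M = M" and inv: "M ** M = mat 1" and sA: "smooth A"
    and curl: "curl (\<lambda>z. - (M *v A (M *v z))) = curl A"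
    and spin: "\<And>j. Top M Us (spinB (curl A) j \<psi>) = spinB (curl A) j (Top M Us \<psi>)"
    and s\<psi>: "\<And>s. smooth (\<lambda>x. \<psi> x s)"
  shows "Top M Us (pauliH m q A \<psi>) = pauliH m q (\<lambda>z. - (M *v A (M *v z))) (Top M Us \<psi>)"
proof (intro ext)
  fix x s
  show "Top M Us (pauliH m q A \<psi>) x s = pauliH m q (\<lambda>z. - (M *v A (M *v z))) (Top M Us \<psi>) x s"
    unfolding Top_pauliH spin pauliH_def curl
      Top_kinetic_reflected[OF sym inv smooth_gateaux_differentiable[OF sA] s\<psi>] ..
qed

theorem theorem2p10:
  fixes m q :: "'n::finite \<Rightarrow> real"
    and A :: "real^3 \<Rightarrow> real^3"
    and M :: "real^3^3"
  assumes "\<forall>j. m j > 0"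
    and "smooth A"
    and "orthogonal_matrix M"
    and "M ** M = mat 1"
    and "\<forall>x. det M *\<^sub>R (M *v curl A (M *v x)) = - curl A x"
  shows "\<exists>Us. unitary2 Us \<and>
           (\<exists>G :: real^3 \<Rightarrow> real. smooth G \<and>
              (\<forall>\<psi> :: 'n wf. (\<forall>s. smooth (\<lambda>x. \<psi> x s)) \<longrightarrow>
                 Top M Us (pauliH m q A \<psi>) = pauliH m q (\<lambda>y. A y + grad G y) (Top M Us \<psi>)))"
proof -
  \<comment> \<open>The masses enter only through the factors \<open>1 / (2 m j)\<close>.\<close>
  note sA = assms(2) and B = assms(5)[rule_format]
  have sym: "transpose M = M"
    using assms(3,4) by (rule symmetric_if_orthogonal_involution)
  have curl: "curl (\<lambda>z. - (M *v A (M *v z))) = curl A"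
    using curl_reflect[OF smooth_gateaux_differentiable[OF sA] sym assms(4)] B by (simp add: fun_eq_iff)
  obtain G where "smooth G" and AG: "(\<lambda>y. A y + grad G y) = (\<lambda>z. - (M *v A (M *v z)))"
    using gauge_equivalent_if_curl_eq[OF sA smooth_reflected[OF sA] curl] by blast
  obtain Us where "unitary2 Us" and spin: "\<And>j (\<psi> :: 'n wf). Top M Us (spinB (curl A) j \<psi>) = spinB (curl A) j (Top M Us \<psi>)"
    using exists_spin_intertwiner_reflected[where B = "curl A", OF assms(3,4) B] by blast
  show ?thesis
  proof (intro exI conjI allI impI)
    fix \<psi> :: "'n wf"
    assume "\<forall>s. smooth (\<lambda>x. \<psi> x s)"
    then show "Top M Us (pauliH m q A \<psi>) = pauliH m q (\<lambda>y. A y + grad G y) (Top M Us \<psi>)"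
      unfolding AG by (intro Top_pauliH_reflected[OF sym assms(4) sA curl spin]) blast
  qed fact+
qed

end
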